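(* Let $m,\Delta$ be positive integers and $X\subseteq\{-\Delta,\dots,\Delta\}^m$ such that $C=\mathrm{cone}(X)$ is pointed. Then there is a halfspace $H=\{x\in\mathbb{R}^m: d^{\mathsf T}x\ge 0\}$ with $C\cap H=\{\mathbf 0\}$, defined by some $d\in\mathbb{Z}^m$ with \[ \|d\|_\infty\le\Delta^m m^{m/2+1}. \]
   Context: $\mathrm{cone}(X)=\{\sum_{x\in X}\lambda_x x:\lambda_x\ge0\}$. A cone is pointed if $\mathbf 0$ is a vertex of it. *)

theory Defs
  imports "HOL-Analysis.Analysis"
begin

definition conic_comb :: "('a::real_vector) set \<Rightarrow> 'a set" where
  "conic_comb X = {y. \<exists>c. (\<forall>x\<in>X. c x \<ge> 0) \<and> y = (\<Sum>x\<in>X. c x *\<^sub>R x)}"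

definition pointed_cone :: "('a::real_vector) set \<Rightarrow> bool" where
  "pointed_cone C \<longleftrightarrow> 0 extreme_point_of C"

end

theory Submission
  imports Defs
begin

text \<open>
  Since the cone is pointed, \<open>0\<close> is not in the convex hull of the nonzero generators \<open>Y\<close>,
  so some \<open>d\<close> has \<open>d \<bullet> y \<le> -1\<close> on \<open>Y\<close>. Pushing \<open>d\<close> to a vertex of this polyhedron
  makes the tight generators span \<open>Y\<close>; if \<open>B\<close> is a basis of them, every solution of
  \<open>d \<bullet> b = -c\<close> (\<open>b \<in> B\<close>, \<open>c > 0\<close>) is \<open>c\<close> times the vertex on \<open>span Y\<close>, hence negative on
  \<open>Y\<close>. Completing \<open>B\<close> by unit vectors to a basis and applying Cramer's rule yields an
  integer solution whose entries are determinants of matrices with entries in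
  \<open>[-\<Delta>, \<Delta>]\<close>, bounded by Hadamard's inequality by \<open>(\<Delta> \<surd>m)\<^sup>m\<close>.
\<close>

lemma det_orthogonal_rows:
  fixes A :: "real^'n^'n"
  assumes "\<And>i j. i \<noteq> j \<Longrightarrow> row i A \<bullet> row j A = 0"
  shows "\<bar>det A\<bar> = (\<Prod>i\<in>UNIV. norm (row i A))"
proof -
  have entry: "(A ** transpose A) $ i $ j = row i A \<bullet> row j A" for i j
    by (simp add: matrix_matrix_mult_def transpose_def inner_vec_def row_def mult.commute)
  have "\<bar>det A\<bar>^2 = det (A ** transpose A)"
    by (simp add: det_mul power2_eq_square)
  also have "\<dots> = (\<Prod>i\<in>UNIV. row i A \<bullet> row i A)"
    by (subst det_diagonal) (auto simp: entry assms)
  also have "\<dots> = (\<Prod>i\<in>UNIV. norm (row i A))^2"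
    by (simp add: power2_norm_eq_inner[symmetric] prod_power_distrib)
  finally show ?thesis
    by (rule power2_eq_imp_eq) (auto intro: prod_nonneg)
qed

text \<open>Gram--Schmidt on the rows indexed by \<open>S\<close>: subtracting from a row its projection onto
  other rows keeps the determinant and does not increase the norm of the row.\<close>
lemma exists_orthogonal_rows_same_det:
  fixes A :: "real^'n^'n"
  assumes "finite S"
  shows "\<exists>A'. det A' = det A \<and> (\<forall>i. norm (row i A') \<le> norm (row i A))
     \<and> (\<forall>i\<in>S. \<forall>j\<in>S. i \<noteq> j \<longrightarrow> row i A' \<bullet> row j A' = 0)"
  using assms
proof (induction S rule: finite_induct)
  case empty
  then show ?case by blast
next
  case (insert a S)
  then obtain A' where det: "det A' = det A" and norm: "\<forall>i. norm (row i A') \<le> norm (row i A)"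
    and orth: "\<forall>i\<in>S. \<forall>j\<in>S. i \<noteq> j \<longrightarrow> row i A' \<bullet> row j A' = 0" by blast
  define p where "p = (\<Sum>j\<in>S. ((row a A' \<bullet> row j A') / (row j A' \<bullet> row j A')) *\<^sub>R row j A')"
  define A'' where "A'' = (\<chi> k. if k = a then row a A' + (- p) else row k A')"
  have row_A'': "row k A'' = (if k = a then row a A' - p else row k A')" for k
    by (simp add: A''_def row_def)
  have "- p \<in> vec.span {row j A' |j. j \<noteq> a}"
    unfolding p_def span_vec_eq using insert.hyps(2)
    by (intro span_neg span_sum span_mul span_base) auto
  then have det': "det A'' = det A'"
    unfolding A''_def by (rule det_row_span)
  have orth_a: "(row a A' - p) \<bullet> row j A' = 0" if "j \<in> S" for j
  proof -
    have "p \<bullet> row j A' = ((row a A' \<bullet> row j A') / (row j A' \<bullet> row j A')) * (row j A' \<bullet> row j A')"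
      unfolding p_def inner_sum_left using orth that insert.hyps(1)
      by (subst sum.remove[of _ j]) (auto intro!: sum.neutral)
    also have "\<dots> = row a A' \<bullet> row j A'"
      by (cases "row j A' \<bullet> row j A' = 0") auto
    finally show ?thesis by (simp add: inner_diff_left)
  qed
  have "(row a A' - p) \<bullet> p = 0"
    by (subst (2) p_def) (simp add: inner_sum_right orth_a)
  then have "norm (row a A')^2 = norm (row a A' - p)^2 + norm p ^2"
    by (metis norm_add_Pythagorean orthogonal_def diff_add_cancel)
  then have "norm (row a A' - p) \<le> norm (row a A')"
    by (simp add: power2_le_imp_le)
  then have norm': "norm (row i A'') \<le> norm (row i A)" for i
    using norm by (auto simp: row_A'' intro: order_trans)
  have "\<forall>i\<in>insert a S. \<forall>j\<in>insert a S. i \<noteq> j \<longrightarrow> row i A'' \<bullet> row j A'' = 0"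
    using orth orth_a insert.hyps(2) by (auto simp: row_A'' inner_commute)
  then show ?case
    using det det' norm' by metis
qed

theorem hadamard_inequality:
  fixes A :: "real^'n^'n"
  shows "\<bar>det A\<bar> \<le> (\<Prod>i\<in>UNIV. norm (row i A))"
proof -
  obtain A' where det: "det A' = det A" and norm: "\<forall>i. norm (row i A') \<le> norm (row i A)"
    and "\<forall>i\<in>UNIV. \<forall>j\<in>UNIV. i \<noteq> j \<longrightarrow> row i A' \<bullet> row j A' = 0"
    using exists_orthogonal_rows_same_det[of UNIV A] by auto
  then have "\<bar>det A\<bar> = (\<Prod>i\<in>UNIV. norm (row i A'))"
    using det_orthogonal_rows[of A'] by auto
  also have "\<dots> \<le> (\<Prod>i\<in>UNIV. norm (row i A))"
    by (intro prod_mono) (auto simp: norm)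
  finally show ?thesis .
qed

lemma infnorm_le_cart:
  fixes v :: "real^'n"
  assumes "\<And>i. \<bar>v$i\<bar> \<le> c"
  shows "infnorm v \<le> c"
  unfolding infnorm_cart by (rule cSup_least) (auto simp: assms)

lemma norm_le_sqrt_card_cart:
  fixes v :: "real^'n"
  assumes "\<And>i. \<bar>v$i\<bar> \<le> c"
  shows "norm v \<le> sqrt CARD('n) * c"
proof -
  have "sqrt DIM(real^'n) * infnorm v \<le> sqrt CARD('n) * c"
    using infnorm_le_cart[OF assms] by (simp add: mult_left_mono)
  then show ?thesis
    using norm_le_infnorm[of v] by linarith
qed

lemma det_Ints:
  fixes A :: "real^'n^'n"
  assumes "\<And>i j. A$i$j \<in> \<int>"
  shows "det A \<in> \<int>"
  unfolding det_def by (intro Ints_sum Ints_mult Ints_prod) (auto simp: assms)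

lemma integer_cramer_solution:
  fixes M :: "real^'n^'n" and r :: "real^'n"
  assumes "det M \<noteq> 0"
    and M: "\<And>i j. M$i$j \<in> \<int> \<and> \<bar>M$i$j\<bar> \<le> D" and r: "\<And>i. r$i \<in> \<int> \<and> \<bar>r$i\<bar> \<le> D"
  shows "\<exists>d. (\<forall>k. d$k \<in> \<int>) \<and> M *v d = \<bar>det M\<bar> *\<^sub>R r
    \<and> (\<forall>k. \<bar>d$k\<bar> \<le> (sqrt CARD('n) * D)^CARD('n))"
proof -
  define M' where "M' k = (\<chi> i j. if j = k then r$i else M$i$j)" for k
  define d where "d = (\<chi> k. sgn (det M) * det (M' k))"
  have entry: "M' k $ i $ j \<in> \<int> \<and> \<bar>M' k $ i $ j\<bar> \<le> D" for k i j
    using M r by (simp add: M'_def)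
  have "M *v (\<chi> k. det (M' k) / det M) = r"
    using cramer[OF assms(1)] by (simp add: M'_def)
  moreover have "d = \<bar>det M\<bar> *\<^sub>R (\<chi> k. det (M' k) / det M)"
    using assms(1) by (auto simp: vec_eq_iff d_def sgn_if)
  ultimately have "M *v d = \<bar>det M\<bar> *\<^sub>R r"
    by (simp add: matrix_vector_mult_scaleR)
  moreover have "d$k \<in> \<int>" for k
    using entry by (auto simp: d_def sgn_if intro: det_Ints)
  moreover have "\<bar>d$k\<bar> \<le> (sqrt CARD('n) * D)^CARD('n)" for k
  proof -
    have "\<bar>d$k\<bar> = \<bar>det (M' k)\<bar>"
      using assms(1) by (simp add: d_def abs_mult abs_sgn_eq)
    also have "\<dots> \<le> (\<Prod>i\<in>UNIV. norm (row i (M' k)))"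
      by (rule hadamard_inequality)
    also have "\<dots> \<le> (\<Prod>i\<in>(UNIV::'n set). sqrt CARD('n) * D)"
      by (intro prod_mono conjI norm_ge_zero norm_le_sqrt_card_cart) (simp_all add: row_def entry)
    finally show ?thesis by simp
  qed
  ultimately show ?thesis by blast
qed

lemma independent_extend_with_Basis_cart:
  fixes B :: "(real^'n) set"
  assumes "independent B"
  obtains B' where "B \<subseteq> B'" "B' \<subseteq> B \<union> Basis" "span B' = UNIV" "finite B'" "card B' = CARD('n)"
proof -
  obtain B' where B': "B \<subseteq> B'" "B' \<subseteq> B \<union> Basis" "independent B'" "B \<union> Basis \<subseteq> span B'"
    using maximal_independent_subset_extend[of B "B \<union> Basis"] assms by blast
  have "span B' = UNIV"
    using B'(4) span_Basis by (metis le_sup_iff span_minimal subspace_span top.extremum_uniqueI)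
  moreover have "finite B'"
    using independent_bound_general B'(3) by blast
  moreover have "card B' = CARD('n)"
    using dim_span_eq_card_independent[OF B'(3)] \<open>span B' = UNIV\<close> by simp
  ultimately show ?thesis
    using B' that by blast
qed

text \<open>Unit vectors have entries in \<open>{0, 1}\<close>, which is why they may complete \<open>B\<close> without
  spoiling the entry bound \<open>D \<ge> 1\<close>.\<close>
lemma exists_integer_common_value_on_independent:
  fixes B :: "(real^'n) set"
  assumes "independent B" and "D \<ge> 1"
    and B: "\<And>b i. b \<in> B \<Longrightarrow> b$i \<in> \<int> \<and> \<bar>b$i\<bar> \<le> D"
  shows "\<exists>d c. (\<forall>i. d$i \<in> \<int>) \<and> c > 0 \<and> (\<forall>b\<in>B. d \<bullet> b = -c)
     \<and> (\<forall>i. \<bar>d$i\<bar> \<le> (sqrt CARD('n) * D)^CARD('n))"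
proof -
  obtain B' where B': "B \<subseteq> B'" "B' \<subseteq> B \<union> Basis" "span B' = UNIV" "finite B'" "card B' = CARD('n)"
    using independent_extend_with_Basis_cart[OF assms(1)] by metis
  obtain f where f: "bij_betw f (UNIV::'n set) B'"
    using finite_same_card_bij[of "UNIV::'n set" B'] B' by auto
  define M :: "real^'n^'n" where "M = (\<chi> i. f i)"
  have "rows M = B'"
    using f by (auto simp: rows_def row_def M_def bij_betw_def)
  then obtain N :: "real^'n^'n" where "N ** M = mat 1"
    using B'(3) matrix_left_invertible_span_rows by blast
  then have "det N * det M = 1"
    by (metis det_I det_mul)
  then have det_M: "det M \<noteq> 0"
    by auto
  have M_entries: "M$i$j \<in> \<int> \<and> \<bar>M$i$j\<bar> \<le> D" for i j
  proof -
    have "f i \<in> B \<or> f i \<in> Basis"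
      using f B'(2) by (auto simp: bij_betw_def)
    then show ?thesis
      using B assms(2) by (auto simp: M_def Basis_vec_def axis_def)
  qed
  define r :: "real^'n" where "r = (\<chi> i. if f i \<in> B then -1 else 0)"
  have r_entries: "r$i \<in> \<int> \<and> \<bar>r$i\<bar> \<le> D" for i
    using assms(2) by (simp add: r_def)
  obtain d where d: "\<forall>k. d$k \<in> \<int>" "M *v d = \<bar>det M\<bar> *\<^sub>R r"
    "\<forall>k. \<bar>d$k\<bar> \<le> (sqrt CARD('n) * D)^CARD('n)"
    using integer_cramer_solution[OF det_M M_entries r_entries] by blast
  have "d \<bullet> b = - \<bar>det M\<bar>" if b: "b \<in> B" for b
  proof -
    obtain i where "f i = b"
      using f b B'(1) unfolding bij_betw_def by blast
    moreover have "(M *v d)$i = f i \<bullet> d"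
      by (simp add: matrix_vector_mult_def inner_vec_def M_def)
    ultimately show ?thesis
      using d(2) b by (simp add: r_def inner_commute)
  qed
  then show ?thesis
    using d det_M by (intro exI[of _ d] exI[of _ "\<bar>det M\<bar>"]) auto
qed

lemma exists_orthogonal_to_span_pos_inner:
  fixes y :: "'a::euclidean_space"
  assumes "y \<notin> span A"
  obtains v where "v \<bullet> y > 0" and "\<And>w. w \<in> span A \<Longrightarrow> v \<bullet> w = 0"
proof -
  obtain p v where p: "p \<in> span A" and v: "\<And>w. w \<in> span A \<Longrightarrow> orthogonal v w" and "y = p + v"
    using orthogonal_subspace_decomp_exists by metis
  then have "v \<bullet> y = v \<bullet> v" and "v \<noteq> 0"
    using assms by (auto simp: inner_add_right orthogonal_def)
  then show ?thesis
    using that[of v] v by (simp add: orthogonal_def)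
qed

text \<open>Moving a feasible point of \<open>{d. \<forall>y\<in>Y. d \<bullet> y \<le> -1}\<close> along a direction orthogonal
  to its tight constraints until a new constraint becomes tight.\<close>
lemma feasible_tight_dim_increase:
  fixes Y :: "'a::euclidean_space set"
  assumes "finite Y" and feasible: "\<forall>y\<in>Y. d \<bullet> y \<le> -1"
    and y: "y \<in> Y" "y \<notin> span {z\<in>Y. d \<bullet> z = -1}"
  obtains d' where "\<forall>y\<in>Y. d' \<bullet> y \<le> -1"
    and "dim {z\<in>Y. d \<bullet> z = -1} < dim {z\<in>Y. d' \<bullet> z = -1}"
proof -
  define A where "A = {z\<in>Y. d \<bullet> z = -1}"
  obtain v where vy: "v \<bullet> y > 0" and vA: "\<And>w. w \<in> span A \<Longrightarrow> v \<bullet> w = 0"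
    using exists_orthogonal_to_span_pos_inner[OF y(2)] unfolding A_def by blast
  define Z where "Z = {z\<in>Y. v \<bullet> z > 0}"
  define g where "g z = (-1 - d \<bullet> z) / (v \<bullet> z)" for z
  have "finite (g ` Z)" "g ` Z \<noteq> {}"
    using assms(1) y vy by (auto simp: Z_def)
  then have "Min (g ` Z) \<in> g ` Z"
    by (rule Min_in)
  then obtain z0 where z0: "z0 \<in> Z" "g z0 = Min (g ` Z)"
    by auto
  have min: "g z0 \<le> g z" if "z \<in> Z" for z
    using z0(2) \<open>finite (g ` Z)\<close> that by simp
  have "g z0 \<ge> 0"
    using z0(1) feasible unfolding g_def Z_def by (auto intro!: divide_nonneg_pos)
  define d' where "d' = d + g z0 *\<^sub>R v"
  have feasible': "d' \<bullet> z \<le> -1" if z: "z \<in> Y" for z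
  proof (cases "v \<bullet> z > 0")
    case True
    then have "g z0 * (v \<bullet> z) \<le> -1 - d \<bullet> z"
      using min[of z] z by (simp add: Z_def g_def pos_le_divide_eq)
    then show ?thesis by (simp add: d'_def inner_add_left)
  next
    case False
    then have "g z0 * (v \<bullet> z) \<le> 0"
      using \<open>g z0 \<ge> 0\<close> by (simp add: mult_nonneg_nonpos)
    then show ?thesis
      using bspec[OF feasible z] by (simp add: d'_def inner_add_left)
  qed
  have "insert z0 A \<subseteq> {z\<in>Y. d' \<bullet> z = -1}"
  proof -
    have "d' \<bullet> z0 = -1"
      using z0(1) by (simp add: d'_def g_def Z_def inner_add_left)
    moreover have "d' \<bullet> a = -1" if "a \<in> A" for a
      using vA[OF span_base[OF that]] that by (simp add: d'_def A_def inner_add_left)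
    ultimately show ?thesis
      using z0(1) by (auto simp: Z_def A_def)
  qed
  moreover have "z0 \<notin> span A"
  proof
    assume "z0 \<in> span A"
    then have "v \<bullet> z0 = 0"
      by (rule vA)
    with z0(1) show False
      by (simp add: Z_def)
  qed
  then have "dim (insert z0 A) = dim A + 1"
    by (simp add: dim_insert)
  ultimately have "dim A < dim {z\<in>Y. d' \<bullet> z = -1}"
    using dim_subset[of "insert z0 A" "{z\<in>Y. d' \<bullet> z = -1}"] by simp
  with feasible' show ?thesis
    unfolding A_def by (intro that) auto
qed

text \<open>A vertex of the polyhedron \<open>{d. \<forall>y\<in>Y. d \<bullet> y \<le> -1}\<close> relative to \<open>span Y\<close>, found as a
  feasible point maximising the dimension of its tight constraints.\<close>
lemma exists_feasible_tight_spanning: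
  fixes Y :: "'a::euclidean_space set"
  assumes "finite Y" and "\<forall>y\<in>Y. d0 \<bullet> y \<le> -1"
  obtains d where "\<forall>y\<in>Y. d \<bullet> y \<le> -1" and "Y \<subseteq> span {z\<in>Y. d \<bullet> z = -1}"
proof -
  define tight_dim where
    "tight_dim k \<longleftrightarrow> (\<exists>d. (\<forall>y\<in>Y. d \<bullet> y \<le> -1) \<and> k = dim {z\<in>Y. d \<bullet> z = -1})" for k
  have "tight_dim (dim {z\<in>Y. d0 \<bullet> z = -1})"
    unfolding tight_dim_def using assms(2) by blast
  moreover have "\<forall>k. tight_dim k \<longrightarrow> k \<le> DIM('a)"
    unfolding tight_dim_def using dim_subset_UNIV by blast
  ultimately have "\<exists>k. tight_dim k \<and> (\<forall>j. tight_dim j \<longrightarrow> j \<le> k)"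
    by (rule Nat.ex_has_greatest_nat)
  then obtain k where "tight_dim k" and k_max: "\<forall>j. tight_dim j \<longrightarrow> j \<le> k"
    by blast
  then obtain d where feasible: "\<forall>y\<in>Y. d \<bullet> y \<le> -1" and k: "k = dim {z\<in>Y. d \<bullet> z = -1}"
    unfolding tight_dim_def by blast
  have "y \<in> span {z\<in>Y. d \<bullet> z = -1}" if y: "y \<in> Y" for y
  proof (rule ccontr)
    assume "y \<notin> span {z\<in>Y. d \<bullet> z = -1}"
    then obtain d' where "\<forall>y\<in>Y. d' \<bullet> y \<le> -1" and "k < dim {z\<in>Y. d' \<bullet> z = -1}"
      using feasible_tight_dim_increase[OF assms(1) feasible y] unfolding k by blast
    then have "tight_dim (dim {z\<in>Y. d' \<bullet> z = -1})" and "k < dim {z\<in>Y. d' \<bullet> z = -1}"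
      unfolding tight_dim_def by blast+
    then show False
      using k_max by (meson not_le)
  qed
  then show ?thesis
    using that feasible by blast
qed

lemma exists_integer_functional_neg:
  fixes Y :: "(real^'n) set"
  assumes "finite Y" and "D \<ge> 1"
    and Y: "\<And>y i. y \<in> Y \<Longrightarrow> y$i \<in> \<int> \<and> \<bar>y$i\<bar> \<le> D"
    and "\<forall>y\<in>Y. d0 \<bullet> y \<le> -1"
  obtains d where "\<forall>i. d$i \<in> \<int>" and "\<forall>y\<in>Y. d \<bullet> y < 0"
    and "\<forall>i. \<bar>d$i\<bar> \<le> (sqrt CARD('n) * D)^CARD('n)"
proof -
  obtain d1 where feasible: "\<forall>y\<in>Y. d1 \<bullet> y \<le> -1" and spanning: "Y \<subseteq> span {z\<in>Y. d1 \<bullet> z = -1}"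
    using exists_feasible_tight_spanning[OF assms(1,4)] by blast
  obtain B where B: "B \<subseteq> {z\<in>Y. d1 \<bullet> z = -1}" "independent B" "{z\<in>Y. d1 \<bullet> z = -1} \<subseteq> span B"
    using maximal_independent_subset by blast
  then have "Y \<subseteq> span B"
    using spanning by (meson span_minimal subspace_span order_trans)
  obtain d c where d: "\<forall>i. d$i \<in> \<int>" "c > 0" "\<forall>b\<in>B. d \<bullet> b = -c"
      "\<forall>i. \<bar>d$i\<bar> \<le> (sqrt CARD('n) * D)^CARD('n)"
    using exists_integer_common_value_on_independent[OF B(2) assms(2)] Y B(1) by blast
  have "d \<bullet> y < 0" if y: "y \<in> Y" for y
  proof -
    \<comment> \<open>\<open>d\<close> and \<open>c *\<^sub>R d1\<close> agree on \<open>B\<close>, hence on \<open>span B \<supseteq> Y\<close>.\<close>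
    have "orthogonal (d - c *\<^sub>R d1) y"
    proof (rule orthogonal_to_span)
      show "y \<in> span B"
        using \<open>Y \<subseteq> span B\<close> y by blast
    next
      fix b assume "b \<in> B"
      then show "orthogonal (d - c *\<^sub>R d1) b"
        using d(3) B(1) by (auto simp: orthogonal_def inner_diff_left)
    qed
    then have "d \<bullet> y = c * (d1 \<bullet> y)"
      by (simp add: orthogonal_def inner_diff_left)
    also have "\<dots> \<le> - c"
      using feasible y d(2) mult_left_mono[of "d1 \<bullet> y" "-1" c] by simp
    finally show ?thesis
      using d(2) by simp
  qed
  then show ?thesis
    using that d(1,4) by blast
qed

lemma finite_bounded_Ints_cart:
  "finite {x :: real^'n. \<forall>i. x$i \<in> \<int> \<and> \<bar>x$i\<bar> \<le> r}"
proof -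
  define T where "T = {t::real. t \<in> \<int> \<and> \<bar>t\<bar> \<le> r}"
  have "T \<subseteq> of_int ` {\<lfloor>-r\<rfloor>..\<lceil>r\<rceil>}"
  proof
    fix t assume "t \<in> T"
    then obtain k where "t = of_int k" "\<bar>of_int k\<bar> \<le> r"
      unfolding T_def by (auto elim: Ints_cases)
    then show "t \<in> of_int ` {\<lfloor>-r\<rfloor>..\<lceil>r\<rceil>}"
      by (auto simp: floor_le_iff le_ceiling_iff abs_le_iff)
  qed
  then have "finite T"
    by (rule finite_subset) auto
  have "{x :: real^'n. \<forall>i. x$i \<in> \<int> \<and> \<bar>x$i\<bar> \<le> r} \<subseteq> (\<lambda>g. \<chi> i. g i) ` (UNIV \<rightarrow>\<^sub>E T)"
  proof
    fix x :: "real^'n" assume "x \<in> {x. \<forall>i. x$i \<in> \<int> \<and> \<bar>x$i\<bar> \<le> r}"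
    then have "(\<lambda>i. x$i) \<in> UNIV \<rightarrow>\<^sub>E T"
      by (auto simp: T_def)
    then show "x \<in> (\<lambda>g. \<chi> i. g i) ` (UNIV \<rightarrow>\<^sub>E T)"
      by (rule rev_image_eqI) simp
  qed
  moreover have "finite ((\<lambda>g. (\<chi> i. g i)::real^'n) ` (UNIV \<rightarrow>\<^sub>E T))"
    using \<open>finite T\<close> by (intro finite_imageI finite_PiE) auto
  ultimately show ?thesis
    by (rule finite_subset)
qed

lemma conic_comb_sum_subset:
  assumes "finite X" and "S \<subseteq> X" and "\<forall>x\<in>S. c x \<ge> 0"
  shows "(\<Sum>x\<in>S. c x *\<^sub>R x) \<in> conic_comb X"
proof -
  have "(\<Sum>x\<in>X. (if x \<in> S then c x else 0) *\<^sub>R x) = (\<Sum>x\<in>X. if x \<in> S then c x *\<^sub>R x else 0)"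
    by (intro sum.cong) auto
  also have "\<dots> = (\<Sum>x\<in>S. c x *\<^sub>R x)"
    using assms(1,2) by (simp add: sum.inter_restrict[symmetric] Int_absorb1)
  finally have "(\<Sum>x\<in>X. (if x \<in> S then c x else 0) *\<^sub>R x) = (\<Sum>x\<in>S. c x *\<^sub>R x)" .
  then show ?thesis
    unfolding conic_comb_def using assms(3)
    by (intro CollectI exI[of _ "\<lambda>x. if x \<in> S then c x else 0"]) auto
qed

lemma pointed_cone_neg_mem_imp_zero:
  assumes "pointed_cone C" and "u \<in> C" and "- u \<in> C"
  shows "u = 0"
proof (rule ccontr)
  assume "u \<noteq> 0"
  have "u \<noteq> - u"
  proof
    assume "u = - u"
    then have "2 *\<^sub>R u = 0"
      by (metis scaleR_2 add.right_inverse)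
    with \<open>u \<noteq> 0\<close> show False
      by simp
  qed
  then have "0 \<in> open_segment u (- u)"
    using midpoint_in_open_segment[of u "- u"] by (simp add: midpoint_def)
  then show False
    using assms unfolding pointed_cone_def extreme_point_of_def by blast
qed

lemma zero_notin_convex_hull_if_pointed:
  assumes "finite X" and "pointed_cone (conic_comb X)"
  shows "0 \<notin> convex hull (X - {0})"
proof
  assume "0 \<in> convex hull (X - {0})"
  then obtain u where u: "\<forall>x\<in>X - {0}. 0 \<le> u x" "sum u (X - {0}) = 1"
    "(\<Sum>x\<in>X - {0}. u x *\<^sub>R x) = 0"
    using convex_hull_finite[of "X - {0}"] assms(1) by auto
  have "\<exists>y\<in>X - {0}. u y > 0"
  proof (rule ccontr)
    assume "\<not> (\<exists>y\<in>X - {0}. u y > 0)"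
    then have "sum u (X - {0}) = 0"
      using u(1) by (intro sum.neutral) force
    with u(2) show False
      by simp
  qed
  then obtain y where y: "y \<in> X - {0}" "u y > 0"
    by blast
  \<comment> \<open>The term of \<open>y\<close> and the sum of the other terms are opposite points of the cone.\<close>
  have "u y *\<^sub>R y \<in> conic_comb X"
    using conic_comb_sum_subset[OF assms(1), of "{y}" u] y by auto
  moreover have "(\<Sum>x\<in>X - {0} - {y}. u x *\<^sub>R x) \<in> conic_comb X"
    using u(1) by (intro conic_comb_sum_subset assms(1)) auto
  moreover have "(\<Sum>x\<in>X - {0} - {y}. u x *\<^sub>R x) = - (u y *\<^sub>R y)"
    using u(3) y(1) assms(1) by (simp add: sum.remove[of "X - {0}" y] eq_neg_iff_add_eq_0 add.commute)
  ultimately have "u y *\<^sub>R y = 0"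
    by (intro pointed_cone_neg_mem_imp_zero[OF assms(2)]) auto
  then show False
    using y by simp
qed

lemma separating_functional_finite:
  fixes Y :: "'a::euclidean_space set"
  assumes "finite Y" and "0 \<notin> convex hull Y"
  obtains d where "\<forall>y\<in>Y. d \<bullet> y \<le> -1"
proof -
  have "closed (convex hull Y)"
    using assms(1) by (intro compact_imp_closed compact_convex_hull finite_imp_compact)
  then obtain a b where "0 < b" and ab: "\<forall>x\<in>convex hull Y. b < a \<bullet> x"
    using separating_hyperplane_closed_point[OF convex_convex_hull _ assms(2)] by auto
  have "(- (1/b) *\<^sub>R a) \<bullet> y \<le> -1" if "y \<in> Y" for y
  proof -
    have "b < a \<bullet> y"
      using ab hull_subset[of Y convex] that by blast
    then show ?thesis
      using \<open>0 < b\<close> by (simp add: less_divide_eq)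
  qed
  then show ?thesis
    using that by blast
qed

lemma conic_comb_inter_halfspace_eq_zero:
  fixes X :: "'a::real_inner set"
  assumes "finite X" and neg: "\<forall>x\<in>X - {0}. d \<bullet> x < 0"
  shows "conic_comb X \<inter> {x. d \<bullet> x \<ge> 0} = {0}"
proof
  show "{0} \<subseteq> conic_comb X \<inter> {x. d \<bullet> x \<ge> 0}"
    using conic_comb_sum_subset[OF assms(1), of "{}"] by simp
next
  show "conic_comb X \<inter> {x. d \<bullet> x \<ge> 0} \<subseteq> {0}"
  proof
    fix v assume "v \<in> conic_comb X \<inter> {x. d \<bullet> x \<ge> 0}"
    then obtain a where a: "\<forall>x\<in>X. a x \<ge> 0" and v: "v = (\<Sum>x\<in>X. a x *\<^sub>R x)"
      and "d \<bullet> v \<ge> 0"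
      unfolding conic_comb_def by blast
    have terms: "- (a x * (d \<bullet> x)) \<ge> 0" if "x \<in> X" for x
    proof (cases "x = 0")
      case False
      then have "d \<bullet> x < 0"
        using neg that by blast
      then show ?thesis
        using a that by (simp add: mult_nonneg_nonpos)
    qed simp
    have "(\<Sum>x\<in>X. - (a x * (d \<bullet> x))) = - (d \<bullet> v)"
      by (simp add: v inner_sum_right sum_negf)
    moreover have "(\<Sum>x\<in>X. - (a x * (d \<bullet> x))) \<ge> 0"
      using terms by (rule sum_nonneg)
    ultimately have "(\<Sum>x\<in>X. - (a x * (d \<bullet> x))) = 0"
      using \<open>d \<bullet> v \<ge> 0\<close> by linarith
    then have zero: "\<forall>x\<in>X. a x * (d \<bullet> x) = 0"
      using sum_nonneg_eq_0_iff[OF assms(1), of "\<lambda>x. - (a x * (d \<bullet> x))"] terms by simp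
    have "a x *\<^sub>R x = 0" if "x \<in> X" for x
    proof (cases "x = 0")
      case False
      then have "d \<bullet> x \<noteq> 0"
        using neg that by force
      then show ?thesis
        using zero that by auto
    qed simp
    then show "v \<in> {0}"
      unfolding v by (simp add: sum.neutral)
  qed
qed

lemma sqrt_power_le_powr:
  assumes "n \<ge> 1"
  shows "sqrt (real n) ^ n \<le> real n powr (real n / 2 + 1)"
proof -
  have "sqrt (real n) ^ n = real n powr (real n / 2)"
    using assms by (simp add: powr_half_sqrt[symmetric] powr_realpow[symmetric] powr_powr)
  also have "\<dots> \<le> real n powr (real n / 2 + 1)"
    using assms by (intro powr_mono) auto
  finally show ?thesis .
qed

theorem lemma10:
  fixes X :: "(real ^ 'n) set" and \<Delta> :: nat
  assumes "\<Delta> \<ge> 1"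
    and "X \<subseteq> {x. \<forall>i. x $ i \<in> \<int> \<and> \<bar>x $ i\<bar> \<le> real \<Delta>}"
    and "pointed_cone (conic_comb X)"
  shows "\<exists>d :: real ^ 'n. (\<forall>i. d $ i \<in> \<int>)
           \<and> conic_comb X \<inter> {x. d \<bullet> x \<ge> 0} = {0}
           \<and> infnorm d \<le> real \<Delta> ^ CARD('n) * real CARD('n) powr (real CARD('n) / 2 + 1)"
proof -
  have fin: "finite X"
    using finite_subset[OF assms(2) finite_bounded_Ints_cart] .
  obtain d0 where d0: "\<forall>y\<in>X - {0}. d0 \<bullet> y \<le> -1"
    using separating_functional_finite[of "X - {0}"]
      zero_notin_convex_hull_if_pointed[OF fin assms(3)] fin by blast
  have box: "\<And>y i. y \<in> X - {0} \<Longrightarrow> y$i \<in> \<int> \<and> \<bar>y$i\<bar> \<le> real \<Delta>"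
    using assms(2) by blast
  obtain d where d: "\<forall>i. d$i \<in> \<int>" "\<forall>y\<in>X - {0}. d \<bullet> y < 0"
      "\<forall>i. \<bar>d$i\<bar> \<le> (sqrt CARD('n) * real \<Delta>)^CARD('n)"
    using exists_integer_functional_neg[OF _ _ box d0] fin assms(1) by auto
  have "infnorm d \<le> (sqrt CARD('n) * real \<Delta>)^CARD('n)"
    using d(3) by (intro infnorm_le_cart) blast
  also have "\<dots> = real \<Delta> ^ CARD('n) * sqrt CARD('n) ^ CARD('n)"
    by (simp add: power_mult_distrib)
  also have "\<dots> \<le> real \<Delta> ^ CARD('n) * real CARD('n) powr (real CARD('n) / 2 + 1)"
    by (intro mult_left_mono sqrt_power_le_powr) auto
  finally show ?thesis
    using d(1) conic_comb_inter_halfspace_eq_zero[OF fin d(2)] by (intro exI[of _ d] conjI)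
qed

end
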